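(* Let $s>0$, $Y>0$ with $\frac sY<\frac13$, let $x_+(\tau)=\frac sYe^{s\tau}$, $\tau^*=\frac1s\ln\left(\frac Y{3s}\right)>0$, and (so that the coexistence equilibrium $E_+=(x_+(\tau),1-x_+(\tau))$ exists) consider $\tau\in[0,\tau^*]$. Define \[ \omega_+(\tau)=\sqrt{\tfrac12\left(-x_+(\tau)^2+\sqrt{x_+(\tau)^4+s^2\left(12x_+(\tau)^2-16x_+(\tau)+4\right)}\right)}, \] \[ h_1(\omega,\tau)=\frac{\omega}{s}\cdot\frac{s+x_+(\tau)-s\,x_+(\tau)-2x_+(\tau)^2-\omega^2}{(1-2x_+(\tau))^2+\omega^2},\qquad h_2(\omega,\tau)=\frac{\omega^2(1+s-x_+(\tau))-(1-2x_+(\tau))s\,x_+(\tau)}{s\left((1-2x_+(\tau))^2+\omega^2\right)}. \] Then: \begin{enumerate} \item For $\tau\in[0,\tau^*]$, $h_1(\omega_+(\tau),\tau)^2+h_2(\omega_+(\tau),\tau)^2=1$. \item $h_1(\omega_+(\tau^* ),\tau^* )=0$, and $h_1(\omega_+(\tau),\tau)>0$ for $0\leq\tau<\tau^*$. \item $h_2(\omega_+(\tau^* ),\tau^* )=-1$, and $-1<h_2(\omega_+(\tau),\tau)<1$ for $0\leq\tau<\tau^*$. \end{enumerate} *)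

theory Defs
  imports Complex_Main
begin

definition xplus :: "real \<Rightarrow> real \<Rightarrow> real \<Rightarrow> real" where
  "xplus s Y \<tau> = (s / Y) * exp (s * \<tau>)"

definition tau_star :: "real \<Rightarrow> real \<Rightarrow> real" where
  "tau_star s Y = (1 / s) * ln (Y / (3 * s))"

definition omega_plus :: "real \<Rightarrow> real \<Rightarrow> real \<Rightarrow> real" where
  "omega_plus s Y \<tau> = (let x = xplus s Y \<tau> in
     sqrt ((1/2) * (- (x^2) + sqrt (x^4 + s^2 * (12 * x^2 - 16 * x + 4)))))"

definition h1 :: "real \<Rightarrow> real \<Rightarrow> real \<Rightarrow> real \<Rightarrow> real" where
  "h1 s Y \<omega> \<tau> = (let x = xplus s Y \<tau> in
     (\<omega> / s) * ((s + x - s * x - 2 * x^2 - \<omega>^2) / ((1 - 2 * x)^2 + \<omega>^2)))"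

definition h2 :: "real \<Rightarrow> real \<Rightarrow> real \<Rightarrow> real \<Rightarrow> real" where
  "h2 s Y \<omega> \<tau> = (let x = xplus s Y \<tau> in
     (\<omega>^2 * (1 + s - x) - (1 - 2 * x) * s * x) / (s * ((1 - 2 * x)^2 + \<omega>^2)))"

end

theory Submission
  imports Defs
begin

text \<open>With \<open>x = x\<^sub>+(\<tau>)\<close>, the number \<open>w = \<omega>\<^sub>+(\<tau>)\<^sup>2\<close> is the nonnegative root of
  \<open>w\<^sup>2 + x\<^sup>2 w = s\<^sup>2 (1 - x) (1 - 3x)\<close>, and \<open>h\<^sub>1\<^sup>2 + h\<^sub>2\<^sup>2 - 1\<close>, cleared of denominators,
  is a multiple of this quadratic. As \<open>x\<close> increases from \<open>s/Y\<close> to \<open>1/3\<close> on \<open>[0, \<tau>\<^sup>*]\<close>,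
  the right-hand side is positive before \<open>\<tau>\<^sup>*\<close> and zero at \<open>\<tau>\<^sup>*\<close>. So \<open>w = 0\<close> at \<open>\<tau>\<^sup>*\<close>,
  giving \<open>h\<^sub>1 = 0\<close> and \<open>h\<^sub>2 = -1\<close>, while before \<open>\<tau>\<^sup>*\<close> we get \<open>0 < w < s + x - sx - 2x\<^sup>2\<close>,
  which makes \<open>h\<^sub>1 > 0\<close> and hence \<open>|h\<^sub>2| < 1\<close>.\<close>

lemma xplus_tau_star:
  assumes "s > 0" and "Y > 0"
  shows "xplus s Y (tau_star s Y) = 1/3"
  using assms by (simp add: xplus_def tau_star_def)

lemma xplus_pos:
  assumes "s > 0" and "Y > 0"
  shows "xplus s Y \<tau> > 0"
  using assms by (simp add: xplus_def)

lemma xplus_less_iff: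
  assumes "s > 0" and "Y > 0"
  shows "xplus s Y \<sigma> < xplus s Y \<tau> \<longleftrightarrow> \<sigma> < \<tau>"
  using assms by (simp add: xplus_def divide_less_cancel)

lemma xplus_less_third_iff:
  assumes "s > 0" and "Y > 0"
  shows "xplus s Y \<tau> < 1/3 \<longleftrightarrow> \<tau> < tau_star s Y"
  using xplus_less_iff[OF assms, of \<tau> "tau_star s Y"] by (simp add: xplus_tau_star[OF assms])

lemma xplus_le_third_iff:
  assumes "s > 0" and "Y > 0"
  shows "xplus s Y \<tau> \<le> 1/3 \<longleftrightarrow> \<tau> \<le> tau_star s Y"
  using xplus_less_iff[OF assms, of "tau_star s Y" \<tau>] by (auto simp: xplus_tau_star[OF assms])

lemma quadratic_nonneg_root:
  fixes p c :: real
  assumes "c \<ge> 0"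
  defines "w \<equiv> (sqrt (p\<^sup>2 + 4 * c) - p) / 2"
  shows "w \<ge> 0" and "w\<^sup>2 + p * w = c"
proof -
  have disc: "p\<^sup>2 + 4 * c \<ge> p\<^sup>2"
    using assms(1) by simp
  have "p \<le> sqrt (p\<^sup>2)"
    by simp
  also have "\<dots> \<le> sqrt (p\<^sup>2 + 4 * c)"
    using disc real_sqrt_le_mono by blast
  finally show "w \<ge> 0"
    unfolding w_def by simp
  have "(sqrt (p\<^sup>2 + 4 * c))\<^sup>2 = p\<^sup>2 + 4 * c"
    using disc by (simp add: order_trans[OF zero_le_power2])
  then show "w\<^sup>2 + p * w = c"
    unfolding w_def by (simp add: field_simps power2_eq_square)
qed

lemma omega_plus_sq_root:
  fixes s Y \<tau> :: real
  defines "x \<equiv> xplus s Y \<tau>" and "w \<equiv> (omega_plus s Y \<tau>)\<^sup>2"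
  assumes x_le: "x \<le> 1/3"
  shows "omega_plus s Y \<tau> \<ge> 0" and "w\<^sup>2 + x\<^sup>2 * w = s\<^sup>2 * (1 - x) * (1 - 3 * x)"
proof -
  define c where "c = s\<^sup>2 * (1 - x) * (1 - 3 * x)"
  have "c \<ge> 0"
    using x_le by (simp add: c_def)
  moreover have "x ^ 4 + s\<^sup>2 * (12 * x\<^sup>2 - 16 * x + 4) = (x\<^sup>2)\<^sup>2 + 4 * c"
    by (simp add: c_def algebra_simps power2_eq_square power4_eq_xxxx)
  ultimately have "omega_plus s Y \<tau> = sqrt ((sqrt ((x\<^sup>2)\<^sup>2 + 4 * c) - x\<^sup>2) / 2)"
    and "(sqrt ((x\<^sup>2)\<^sup>2 + 4 * c) - x\<^sup>2) / 2 \<ge> 0"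
    using quadratic_nonneg_root(1)[of c "x\<^sup>2"]
    by (simp_all add: omega_plus_def x_def Let_def)
  then show "omega_plus s Y \<tau> \<ge> 0" and "w\<^sup>2 + x\<^sup>2 * w = s\<^sup>2 * (1 - x) * (1 - 3 * x)"
    using quadratic_nonneg_root(2)[OF \<open>c \<ge> 0\<close>, of "x\<^sup>2"] by (simp_all add: w_def c_def)
qed

lemma omega_plus_pos:
  fixes s Y \<tau> :: real
  defines "x \<equiv> xplus s Y \<tau>"
  assumes "s \<noteq> 0" and "x < 1/3"
  shows "omega_plus s Y \<tau> > 0"
proof -
  have "s\<^sup>2 * (1 - x) * (1 - 3 * x) \<noteq> 0"
    using assms(2,3) by simp
  then have "omega_plus s Y \<tau> \<noteq> 0"
    using omega_plus_sq_root(2)[of s Y \<tau>] assms(3) by (auto simp: x_def)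
  then show ?thesis
    using omega_plus_sq_root(1)[of s Y \<tau>] assms(3) by (simp add: x_def)
qed

lemma omega_plus_eq_zero:
  assumes "xplus s Y \<tau> = 1/3"
  shows "omega_plus s Y \<tau> = 0"
proof -
  define w where "w = (omega_plus s Y \<tau>)\<^sup>2"
  have "w\<^sup>2 + w / 9 = 0"
    using omega_plus_sq_root(2)[of s Y \<tau>] assms by (simp add: w_def power_divide)
  moreover have "w \<ge> 0"
    by (simp add: w_def)
  ultimately have "w = 0"
    using zero_le_power2[of w] by linarith
  then show ?thesis
    by (simp add: w_def)
qed

text \<open>The quadratic \<open>q(v) = v\<^sup>2 + x\<^sup>2 v - s\<^sup>2 (1 - x) (1 - 3x)\<close> is increasing on \<open>v \<ge> 0\<close>,
  vanishes at \<open>\<omega>\<^sub>+\<^sup>2\<close> and is positive at \<open>B = s + x - sx - 2x\<^sup>2 \<ge> s (1 - x)\<close>.\<close>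

lemma omega_plus_sq_less:
  fixes s Y \<tau> :: real
  defines "x \<equiv> xplus s Y \<tau>" and "w \<equiv> (omega_plus s Y \<tau>)\<^sup>2"
  assumes s_pos: "s > 0" and x_pos: "0 < x" and x_less: "x < 1/3"
  shows "w < s + x - s * x - 2 * x\<^sup>2"
proof -
  define B where "B = s + x - s * x - 2 * x\<^sup>2"
  define c where "c = s\<^sup>2 * (1 - x) * (1 - 3 * x)"
  have B_ge: "B \<ge> s * (1 - x)"
    using x_pos x_less by (simp add: B_def algebra_simps power2_eq_square)
  have s_1x: "s * (1 - x) > 0"
    using s_pos x_less by simp
  have "c < (s * (1 - x))\<^sup>2"
  proof -
    have "(s * (1 - x))\<^sup>2 - c = 2 * x * s\<^sup>2 * (1 - x)"
      by (simp add: c_def algebra_simps power2_eq_square)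
    also have "\<dots> > 0"
      using s_pos x_pos x_less by simp
    finally show ?thesis
      by simp
  qed
  also have "\<dots> \<le> B\<^sup>2"
    using B_ge s_1x by (simp add: power_mono)
  finally have "c < B\<^sup>2" .
  moreover have "x\<^sup>2 * B > 0"
    using B_ge s_1x x_pos by simp
  ultimately have qB_pos: "B\<^sup>2 + x\<^sup>2 * B - c > 0"
    by linarith
  have qw: "w\<^sup>2 + x\<^sup>2 * w - c = 0"
    using omega_plus_sq_root(2)[of s Y \<tau>] x_less by (simp add: x_def w_def c_def)
  have "(B - w) * (B + w + x\<^sup>2) = (B\<^sup>2 + x\<^sup>2 * B - c) - (w\<^sup>2 + x\<^sup>2 * w - c)"
    by (simp add: algebra_simps power2_eq_square)
  then have "(B - w) * (B + w + x\<^sup>2) > 0"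
    using qB_pos qw by simp
  moreover have "B + w + x\<^sup>2 > 0"
    using B_ge s_1x by (simp add: w_def add_pos_nonneg)
  ultimately show ?thesis
    by (simp add: B_def zero_less_mult_iff)
qed

lemma h1_sq_add_h2_sq:
  fixes s Y \<omega> \<tau> :: real
  defines "x \<equiv> xplus s Y \<tau>"
  assumes "s \<noteq> 0" and "x \<noteq> 1/2"
    and root: "(\<omega>\<^sup>2)\<^sup>2 + x\<^sup>2 * \<omega>\<^sup>2 = s\<^sup>2 * (1 - x) * (1 - 3 * x)"
  shows "(h1 s Y \<omega> \<tau>)\<^sup>2 + (h2 s Y \<omega> \<tau>)\<^sup>2 = 1"
proof -
  define w where "w = \<omega>\<^sup>2"
  define B where "B = s + x - s * x - 2 * x\<^sup>2"
  define N where "N = w * (1 + s - x) - (1 - 2 * x) * s * x"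
  define D where "D = (1 - 2 * x)\<^sup>2 + w"
  have "D > 0"
    using assms(3) by (simp add: D_def w_def add_pos_nonneg)
  have "s\<^sup>2 * D\<^sup>2 - (w * (B - w)\<^sup>2 + N\<^sup>2)
      = (s\<^sup>2 + 2 * B - (1 + s - x)\<^sup>2 + x\<^sup>2 - w) * (w\<^sup>2 + x\<^sup>2 * w - s\<^sup>2 * (1 - x) * (1 - 3 * x))"
    by (simp add: B_def N_def D_def algebra_simps power2_eq_square)
  then have key: "w * (B - w)\<^sup>2 + N\<^sup>2 = s\<^sup>2 * D\<^sup>2"
    using root by (simp add: w_def)
  have "h1 s Y \<omega> \<tau> = \<omega> / s * ((B - w) / D)" and "h2 s Y \<omega> \<tau> = N / (s * D)"
    by (simp_all add: h1_def h2_def Let_def x_def w_def B_def N_def D_def)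
  then have "(h1 s Y \<omega> \<tau>)\<^sup>2 + (h2 s Y \<omega> \<tau>)\<^sup>2 = (w * (B - w)\<^sup>2 + N\<^sup>2) / (s\<^sup>2 * D\<^sup>2)"
    by (simp add: power_mult_distrib power_divide add_divide_distrib w_def)
  also have "\<dots> = 1"
    using key \<open>D > 0\<close> \<open>s \<noteq> 0\<close> by simp
  finally show ?thesis .
qed

lemma h1_pos:
  fixes s Y \<omega> \<tau> :: real
  defines "x \<equiv> xplus s Y \<tau>"
  assumes "s > 0" and "\<omega> > 0" and "\<omega>\<^sup>2 < s + x - s * x - 2 * x\<^sup>2"
  shows "h1 s Y \<omega> \<tau> > 0"
proof -
  have "(1 - 2 * x)\<^sup>2 + \<omega>\<^sup>2 > 0"
    using assms(3) by (simp add: add_nonneg_pos)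
  then show ?thesis
    using assms(2-4) by (simp add: h1_def Let_def flip: x_def)
qed

theorem lemmaA1:
  fixes s Y :: real
  assumes "s > 0" and "Y > 0" and "s / Y < 1/3"
  shows "(\<forall>\<tau>. 0 \<le> \<tau> \<and> \<tau> \<le> tau_star s Y \<longrightarrow>
            (h1 s Y (omega_plus s Y \<tau>) \<tau>)^2 + (h2 s Y (omega_plus s Y \<tau>) \<tau>)^2 = 1)
       \<and> h1 s Y (omega_plus s Y (tau_star s Y)) (tau_star s Y) = 0
       \<and> (\<forall>\<tau>. 0 \<le> \<tau> \<and> \<tau> < tau_star s Y \<longrightarrow> h1 s Y (omega_plus s Y \<tau>) \<tau> > 0)
       \<and> h2 s Y (omega_plus s Y (tau_star s Y)) (tau_star s Y) = -1
       \<and> (\<forall>\<tau>. 0 \<le> \<tau> \<and> \<tau> < tau_star s Y \<longrightarrow>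
            -1 < h2 s Y (omega_plus s Y \<tau>) \<tau> \<and> h2 s Y (omega_plus s Y \<tau>) \<tau> < 1)"
proof -
  \<comment> \<open>\<open>s / Y < 1/3\<close> only makes \<open>\<tau>\<^sup>* > 0\<close>; the claims do not need it.\<close>
  note x_pos = xplus_pos[OF assms(1,2)]
  note x_le = xplus_le_third_iff[OF assms(1,2)]
  note x_less = xplus_less_third_iff[OF assms(1,2)]
  have unit: "(h1 s Y (omega_plus s Y \<tau>) \<tau>)\<^sup>2 + (h2 s Y (omega_plus s Y \<tau>) \<tau>)\<^sup>2 = 1"
    if "\<tau> \<le> tau_star s Y" for \<tau>
  proof -
    have "xplus s Y \<tau> \<le> 1/3"
      using x_le that by simp
    then show ?thesis
      using h1_sq_add_h2_sq[OF _ _ omega_plus_sq_root(2)] assms(1) by simp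
  qed
  have h1_gt_0: "h1 s Y (omega_plus s Y \<tau>) \<tau> > 0" if "\<tau> < tau_star s Y" for \<tau>
    using h1_pos omega_plus_pos omega_plus_sq_less x_pos x_less that assms(1) by simp
  have h2_bounds: "-1 < h2 s Y (omega_plus s Y \<tau>) \<tau> \<and> h2 s Y (omega_plus s Y \<tau>) \<tau> < 1"
    if "\<tau> < tau_star s Y" for \<tau>
  proof -
    have "(h1 s Y (omega_plus s Y \<tau>) \<tau>)\<^sup>2 > 0"
      using h1_gt_0[OF that] by simp
    then have "(h2 s Y (omega_plus s Y \<tau>) \<tau>)\<^sup>2 < 1"
      using unit[OF less_imp_le[OF that]] by linarith
    then show ?thesis
      by (simp add: abs_square_less_1 abs_less_iff)
  qed
  have x_star: "xplus s Y (tau_star s Y) = 1/3"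
    using xplus_tau_star[OF assms(1,2)] .
  have "h1 s Y (omega_plus s Y (tau_star s Y)) (tau_star s Y) = 0"
    and "h2 s Y (omega_plus s Y (tau_star s Y)) (tau_star s Y) = -1"
    using omega_plus_eq_zero[OF x_star] x_star assms(1)
    by (simp_all add: h1_def h2_def Let_def power2_eq_square)
  then show ?thesis
    using unit h1_gt_0 h2_bounds by blast
qed

end
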